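(* Let $\mathcal{H}$ be a PICOD hypergraph with $n\ge1$ clients having request-sets $R_1,\dots,R_n$. Then $\beta(\mathcal{H})=1$ if and only if there exist indices $d_1\in R_1,\dots,d_n\in R_n$ such that the set $\{d_1,\dots,d_n\}$ is an independent set of $\mathcal{H}$.
   Context: PICOD problem: a server holds $m$ messages $b_1,\dots,b_m\in\mathbb{F}_q$; there are $n$ clients, client $i$ having side-information $\{b_j: j\in S_i\}$, $S_i\subseteq[m]$, and request-set $R_i=[m]\setminus S_i$ (assumed non-empty); client $i$ wants any one message $b_j$ with $j\in R_i$. A PICOD scheme of length $\ell$ over $\mathbb{F}_q$ is an encoding map $\phi:\mathbb{F}_q^m\to\mathbb{F}_q^\ell$ such that for every client $i$ there is an index $j_i\in R_i$ and a function $\psi_i$ with $\psi_i(\phi(b),(b_k)_{k\in S_i})=b_{j_i}$ for all $b\in\mathbb{F}_q^m$. The PICOD hypergraph $\mathcal{H}$ has vertex set $[m]$ and edge set $\{R_i:i\in[n]\}$. $\beta_q(\mathcal{H})$ is the minimum length of a PICOD scheme over $\mathbb{F}_q$, and $\beta(\mathcal{H})=\min_q\beta_q(\mathcal{H})$ over all prime powers $q$. An independent set of $\mathcal{H}$ is a set of vertices no two of which lie in a common edge. *)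

theory Defs
  imports "HOL-Library.FuncSet" "HOL-Number_Theory.Prime_Powers"
begin

text \<open>Messages b_1..b_m over an alphabet of size q (the symbols of F_q are
  represented by {0..<q}; the scheme definition uses no field operations).\<close>
definition msg_space :: "nat \<Rightarrow> nat \<Rightarrow> (nat \<Rightarrow> nat) set" where
  "msg_space m q = {1..m} \<rightarrow>\<^sub>E {..<q}"

text \<open>PICOD scheme of length l over F_q for n clients with request sets R i
  (side information S_i = [m] - R_i).\<close>
definition picod_scheme ::
  "nat \<Rightarrow> nat \<Rightarrow> (nat \<Rightarrow> nat set) \<Rightarrow> nat \<Rightarrow> nat \<Rightarrow> ((nat \<Rightarrow> nat) \<Rightarrow> (nat \<Rightarrow> nat)) \<Rightarrow> bool" where
  "picod_scheme m n R q l \<phi> \<longleftrightarrow>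
     (\<forall>b\<in>msg_space m q. \<phi> b \<in> {1..l} \<rightarrow>\<^sub>E {..<q}) \<and>
     (\<forall>i\<in>{1..n}. \<exists>j\<in>R i. \<exists>\<psi> :: (nat \<Rightarrow> nat) \<Rightarrow> (nat \<Rightarrow> nat) \<Rightarrow> nat.
        \<forall>b\<in>msg_space m q. \<psi> (\<phi> b) (restrict b ({1..m} - R i)) = b j)"

definition beta_q :: "nat \<Rightarrow> nat \<Rightarrow> (nat \<Rightarrow> nat set) \<Rightarrow> nat \<Rightarrow> nat" where
  "beta_q m n R q = (LEAST l. \<exists>\<phi>. picod_scheme m n R q l \<phi>)"

definition beta :: "nat \<Rightarrow> nat \<Rightarrow> (nat \<Rightarrow> nat set) \<Rightarrow> nat" where
  "beta m n R = (INF q\<in>{q::nat. primepow q}. beta_q m n R q)"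

definition picod_edges :: "nat \<Rightarrow> (nat \<Rightarrow> nat set) \<Rightarrow> nat set set" where
  "picod_edges n R = R ` {1..n}"

definition hg_independent :: "nat \<Rightarrow> nat set set \<Rightarrow> nat set \<Rightarrow> bool" where
  "hg_independent m E I \<longleftrightarrow> I \<subseteq> {1..m} \<and>
     (\<forall>u\<in>I. \<forall>v\<in>I. u \<noteq> v \<longrightarrow> \<not> (\<exists>e\<in>E. u \<in> e \<and> v \<in> e))"

end

theory Submission
  imports Defs
begin

text \<open>A single transmitted symbol is a bijective function of any coordinate \<open>w\<close> that some
  client decodes from it, as long as the client's side information is held fixed. Hence the
  symbol cannot react to any other coordinate \<open>u\<close> of the same request set, and a client
  that wants to decode \<open>u\<close> from the symbol fails. So the decoded indices \<open>d\<^sub>i\<close> of a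
  length-one scheme satisfy \<open>d\<^sub>a \<in> R\<^sub>k \<Longrightarrow> d\<^sub>a = d\<^sub>k\<close>, i.e. they form an independent set.
  Conversely, for an independent set \<open>D\<close> of decodable indices, the parity of \<open>b\<close> on \<open>D\<close>
  is a binary scheme of length one: client \<open>i\<close> knows all of \<open>D\<close> except \<open>d\<^sub>i\<close>.\<close>

definition decodes ::
  "nat \<Rightarrow> nat \<Rightarrow> ((nat \<Rightarrow> nat) \<Rightarrow> (nat \<Rightarrow> nat)) \<Rightarrow> nat set \<Rightarrow> nat \<Rightarrow> bool" where
  "decodes m q \<phi> A j \<longleftrightarrow> (\<exists>\<psi> :: (nat \<Rightarrow> nat) \<Rightarrow> (nat \<Rightarrow> nat) \<Rightarrow> nat.
     \<forall>b\<in>msg_space m q. \<psi> (\<phi> b) (restrict b ({1..m} - A)) = b j)"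

lemma picod_scheme_iff_decodes:
  "picod_scheme m n R q l \<phi> \<longleftrightarrow>
     (\<forall>b\<in>msg_space m q. \<phi> b \<in> {1..l} \<rightarrow>\<^sub>E {..<q}) \<and>
     (\<forall>i\<in>{1..n}. \<exists>j\<in>R i. decodes m q \<phi> (R i) j)"
  by (simp add: picod_scheme_def decodes_def)

lemma decodes_iff_separates:
  "decodes m q \<phi> A j \<longleftrightarrow>
     (\<forall>b\<in>msg_space m q. \<forall>b'\<in>msg_space m q. \<phi> b = \<phi> b' \<longrightarrow>
        restrict b ({1..m} - A) = restrict b' ({1..m} - A) \<longrightarrow> b j = b' j)"
    (is "_ \<longleftrightarrow> ?sep")
proof
  assume "decodes m q \<phi> A j"
  then show ?sep unfolding decodes_def by metis
next
  assume sep: ?sep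
  let ?X = "{1..m} - A"
  define \<psi> where "\<psi> c s = (SOME b. b \<in> msg_space m q \<and> \<phi> b = c \<and> restrict b ?X = s) j"
    for c s
  have "\<psi> (\<phi> b) (restrict b ?X) = b j" if b: "b \<in> msg_space m q" for b
  proof -
    have "\<exists>b'. b' \<in> msg_space m q \<and> \<phi> b' = \<phi> b \<and> restrict b' ?X = restrict b ?X"
      using b by blast
    then show ?thesis
      unfolding \<psi>_def by (rule someI2_ex) (use sep b in blast)
  qed
  then show "decodes m q \<phi> A j"
    unfolding decodes_def by blast
qed

lemma fun_upd_in_msg_space:
  "b \<in> msg_space m q \<Longrightarrow> j \<in> {1..m} \<Longrightarrow> y < q \<Longrightarrow> b(j := y) \<in> msg_space m q"
  unfolding msg_space_def by (metis PiE_fun_upd insert_absorb lessThan_iff)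

lemma zero_in_msg_space: "0 < q \<Longrightarrow> (\<lambda>i\<in>{1..m}. 0) \<in> msg_space m q"
  unfolding msg_space_def by auto

lemma decodes_fun_upd:
  assumes "decodes m q \<phi> A j" "j \<in> A" "j \<in> {1..m}"
    and b: "b \<in> msg_space m q" and "y < q" "\<phi> (b(j := y)) = \<phi> b"
  shows "b j = y"
proof -
  have "restrict (b(j := y)) ({1..m} - A) = restrict b ({1..m} - A)"
    using \<open>j \<in> A\<close> by simp
  then have "(b(j := y)) j = b j"
    using assms fun_upd_in_msg_space[OF b] unfolding decodes_iff_separates by blast
  then show ?thesis by simp
qed

lemma no_length_zero_scheme:
  assumes "1 < q" "1 \<le> n" "R 1 \<subseteq> {1..m}"
  shows "\<not> picod_scheme m n R q 0 \<phi>"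
proof
  assume scheme: "picod_scheme m n R q 0 \<phi>"
  then obtain j where j: "j \<in> R 1" and dec: "decodes m q \<phi> (R 1) j"
    using \<open>1 \<le> n\<close> unfolding picod_scheme_iff_decodes by fastforce
  have len0: "\<forall>b\<in>msg_space m q. \<phi> b \<in> {1..0} \<rightarrow>\<^sub>E {..<q}"
    using scheme unfolding picod_scheme_def by blast
  define z where "z = (\<lambda>i\<in>{1..m}. 0 :: nat)"
  have z: "z \<in> msg_space m q" and jm: "j \<in> {1..m}"
    using zero_in_msg_space assms j z_def by auto
  have "\<phi> (z(j := 1)) = \<phi> z"
    using len0 z fun_upd_in_msg_space[OF z jm \<open>1 < q\<close>] by (intro PiE_ext) auto
  then have "z j = 1"
    using decodes_fun_upd[OF dec j jm z \<open>1 < q\<close>] by blast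
  then show False
    using jm by (simp add: z_def)
qed

lemma length_one_encoding_ignores_request:
  assumes len1: "\<forall>b\<in>msg_space m q. \<phi> b \<in> {1..1} \<rightarrow>\<^sub>E {..<q}"
    and dec: "decodes m q \<phi> A w" and "w \<in> A" "w \<in> {1..m}"
    and "u \<in> A" "u \<in> {1..m}" "u \<noteq> w"
    and b: "b \<in> msg_space m q" and "y < q"
  shows "\<phi> (b(u := y)) = \<phi> b"
proof -
  let ?X = "{1..m} - A"
  have sep: "b' w = b'' w"
    if "b' \<in> msg_space m q" "b'' \<in> msg_space m q" "\<phi> b' = \<phi> b''"
       "restrict b' ?X = restrict b'' ?X" for b' b''
    using dec that unfolding decodes_iff_separates by blast
  have symbol_eq: "\<phi> b' = \<phi> b''"
    if "b' \<in> msg_space m q" "b'' \<in> msg_space m q" "\<phi> b' 1 = \<phi> b'' 1" for b' b''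
    using that len1 by (intro PiE_ext[of _ "{1..1}" "\<lambda>_. {..<q}"]) auto
  have bw: "b(w := x) \<in> msg_space m q" if "x < q" for x
    using fun_upd_in_msg_space[OF b \<open>w \<in> {1..m}\<close> that] .
  have by': "b(u := y) \<in> msg_space m q"
    using fun_upd_in_msg_space[OF b \<open>u \<in> {1..m}\<close> \<open>y < q\<close>] .
  define h where "h x = \<phi> (b(w := x)) 1" for x
  have "inj_on h {..<q}"
  proof (rule inj_onI)
    fix x x' assume "x \<in> {..<q}" "x' \<in> {..<q}" "h x = h x'"
    then show "x = x'"
      using sep[OF bw bw symbol_eq[OF bw bw]] \<open>w \<in> A\<close> unfolding h_def by auto
  qed
  moreover have "h ` {..<q} \<subseteq> {..<q}"
    using len1 bw unfolding h_def by (auto simp: PiE_iff)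
  ultimately have "h ` {..<q} = {..<q}"
    by (simp add: endo_inj_surj)
  moreover have "\<phi> (b(u := y)) 1 \<in> {..<q}"
    using len1 by' by (auto simp: PiE_iff)
  ultimately obtain x where x: "x < q" "\<phi> (b(u := y)) 1 = h x"
    by (metis imageE lessThan_iff)
  then have eq: "\<phi> (b(u := y)) = \<phi> (b(w := x))"
    using symbol_eq[OF by' bw] unfolding h_def by blast
  have "restrict (b(u := y)) ?X = restrict (b(w := x)) ?X"
    using \<open>u \<in> A\<close> \<open>w \<in> A\<close> by simp
  then have "b w = x"
    using sep[OF by' bw[OF x(1)] eq] \<open>u \<noteq> w\<close> by simp
  then show ?thesis
    using eq by (metis fun_upd_triv)
qed

lemma length_one_scheme_independent:
  assumes "1 < q" and R: "\<forall>i\<in>{1..n}. R i \<subseteq> {1..m}"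
    and scheme: "picod_scheme m n R q 1 \<phi>"
  shows "\<exists>d. (\<forall>i\<in>{1..n}. d i \<in> R i) \<and> hg_independent m (picod_edges n R) (d ` {1..n})"
proof -
  have len1: "\<forall>b\<in>msg_space m q. \<phi> b \<in> {1..1} \<rightarrow>\<^sub>E {..<q}"
    using scheme unfolding picod_scheme_def by blast
  have "\<forall>i\<in>{1..n}. \<exists>j. j \<in> R i \<and> decodes m q \<phi> (R i) j"
    using scheme unfolding picod_scheme_iff_decodes by blast
  then obtain d where dR: "\<forall>i\<in>{1..n}. d i \<in> R i"
    and dec: "\<forall>i\<in>{1..n}. decodes m q \<phi> (R i) (d i)"
    by metis
  have only_decoded_index_in_request: "d a = d k"
    if k: "k \<in> {1..n}" and a: "a \<in> {1..n}" and da: "d a \<in> R k" for k a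
  proof (rule ccontr)
    assume ne: "d a \<noteq> d k"
    define z where "z = (\<lambda>i\<in>{1..m}. 0 :: nat)"
    have z: "z \<in> msg_space m q"
      using zero_in_msg_space \<open>1 < q\<close> z_def by simp
    have dam: "d a \<in> {1..m}" and dkm: "d k \<in> {1..m}"
      using R dR k da by blast+
    have "\<phi> (z(d a := 1)) = \<phi> z"
      using length_one_encoding_ignores_request[OF len1 dec[rule_format, OF k] _ dkm da dam ne z
          \<open>1 < q\<close>] dR k by blast
    then have "z (d a) = 1"
      using decodes_fun_upd[OF dec[rule_format, OF a] _ dam z \<open>1 < q\<close>] dR a by blast
    then show False
      using dam by (simp add: z_def)
  qed
  have "hg_independent m (picod_edges n R) (d ` {1..n})"
    unfolding hg_independent_def picod_edges_def
  proof (intro conjI ballI impI notI)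
    show "d ` {1..n} \<subseteq> {1..m}"
      using R dR by blast
  next
    fix u v assume "u \<in> d ` {1..n}" "v \<in> d ` {1..n}" "u \<noteq> v"
      and "\<exists>e\<in>R ` {1..n}. u \<in> e \<and> v \<in> e"
    then obtain a b k where "a \<in> {1..n}" "b \<in> {1..n}" "k \<in> {1..n}"
      "d a \<in> R k" "d b \<in> R k" "d a \<noteq> d b"
      by blast
    then show False
      using only_decoded_index_in_request by metis
  qed
  then show ?thesis
    using dR by blast
qed

definition parity_encoding :: "nat set \<Rightarrow> (nat \<Rightarrow> nat) \<Rightarrow> (nat \<Rightarrow> nat)" where
  "parity_encoding D b = (\<lambda>k\<in>{1..1}. (\<Sum>x\<in>D. b x) mod 2)"

lemma parity_encoding_decodes:
  assumes "finite D" "D \<subseteq> {1..m}" "j \<in> D" "D \<inter> A \<subseteq> {j}"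
  shows "decodes m 2 (parity_encoding D) A j"
  unfolding decodes_iff_separates
proof (intro ballI impI)
  fix b b' assume b: "b \<in> msg_space m 2" and b': "b' \<in> msg_space m 2"
    and "parity_encoding D b = parity_encoding D b'"
    and side: "restrict b ({1..m} - A) = restrict b' ({1..m} - A)"
  then have "(\<Sum>x\<in>D. b x) mod 2 = (\<Sum>x\<in>D. b' x) mod 2"
    unfolding parity_encoding_def by (metis atLeastAtMost_singleton insertI1 restrict_apply')
  moreover have "(\<Sum>x\<in>D - {j}. b x) = (\<Sum>x\<in>D - {j}. b' x)"
  proof (rule sum.cong)
    fix x assume "x \<in> D - {j}"
    then have "x \<in> {1..m} - A"
      using assms by blast
    then show "b x = b' x"
      using side by (metis restrict_apply')
  qed simp
  ultimately have "(b j + (\<Sum>x\<in>D - {j}. b x)) mod 2 = (b' j + (\<Sum>x\<in>D - {j}. b x)) mod 2"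
    using sum.remove[OF \<open>finite D\<close> \<open>j \<in> D\<close>] by metis
  moreover have "b j < 2" "b' j < 2"
    using b b' assms unfolding msg_space_def by (auto simp: PiE_iff)
  ultimately show "b j = b' j"
    by presburger
qed

lemma independent_parity_scheme:
  assumes dR: "\<forall>i\<in>{1..n}. d i \<in> R i"
    and ind: "hg_independent m (picod_edges n R) (d ` {1..n})"
  shows "picod_scheme m n R 2 1 (parity_encoding (d ` {1..n}))"
  unfolding picod_scheme_iff_decodes
proof (intro conjI ballI)
  show "parity_encoding (d ` {1..n}) b \<in> {1..1} \<rightarrow>\<^sub>E {..<2}" for b
    by (simp add: parity_encoding_def)
next
  fix i assume i: "i \<in> {1..n}"
  have "d ` {1..n} \<inter> R i \<subseteq> {d i}"
    using ind dR i unfolding hg_independent_def picod_edges_def by blast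
  then have "decodes m 2 (parity_encoding (d ` {1..n})) (R i) (d i)"
    using ind i by (intro parity_encoding_decodes) (auto simp: hg_independent_def)
  then show "\<exists>j\<in>R i. decodes m 2 (parity_encoding (d ` {1..n})) (R i) j"
    using dR i by blast
qed

lemma uncoded_scheme:
  assumes "\<forall>i\<in>{1..n}. R i \<noteq> {}"
  shows "picod_scheme m n R q m (\<lambda>b. b)"
  unfolding picod_scheme_iff_decodes
proof (intro conjI ballI)
  show "b \<in> {1..m} \<rightarrow>\<^sub>E {..<q}" if "b \<in> msg_space m q" for b
    using that by (simp add: msg_space_def)
next
  fix i assume "i \<in> {1..n}"
  then obtain j where "j \<in> R i"
    using assms by blast
  moreover have "decodes m q (\<lambda>b. b) (R i) j"
    unfolding decodes_def by (rule exI[of _ "\<lambda>c s. c j"]) simp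
  ultimately show "\<exists>j\<in>R i. decodes m q (\<lambda>b. b) (R i) j"
    by blast
qed

lemma beta_q_scheme:
  assumes "\<forall>i\<in>{1..n}. R i \<noteq> {}"
  shows "\<exists>\<phi>. picod_scheme m n R q (beta_q m n R q) \<phi>"
  unfolding beta_q_def by (rule LeastI_ex) (use uncoded_scheme[OF assms] in blast)

lemma beta_eq_1_iff:
  assumes "1 \<le> n" "\<forall>i\<in>{1..n}. R i \<subseteq> {1..m} \<and> R i \<noteq> {}"
  shows "beta m n R = 1 \<longleftrightarrow> (\<exists>q \<phi>. primepow q \<and> picod_scheme m n R q 1 \<phi>)"
proof -
  let ?K = "beta_q m n R ` {q. primepow q}"
  have "?K \<noteq> {}"
    using primepow_prime[OF two_is_prime_nat] by blast
  then have beta_in: "beta m n R \<in> ?K"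
    unfolding beta_def by (rule Inf_nat_def1)
  have ge1: "1 \<le> beta_q m n R q" if "primepow q" for q
  proof (rule ccontr)
    assume "\<not> 1 \<le> beta_q m n R q"
    then have "beta_q m n R q = 0"
      by simp
    then obtain \<phi> where "picod_scheme m n R q 0 \<phi>"
      using beta_q_scheme[of n R m q] assms(2) by auto
    moreover have "R 1 \<subseteq> {1..m}"
      using assms by auto
    ultimately show False
      using no_length_zero_scheme primepow_gt_Suc_0[OF that] assms(1) by auto
  qed
  show ?thesis
  proof
    assume "beta m n R = 1"
    then obtain q where "primepow q" "beta_q m n R q = 1"
      using beta_in by auto
    then show "\<exists>q \<phi>. primepow q \<and> picod_scheme m n R q 1 \<phi>"
      using beta_q_scheme[of n R m q] assms(2) by auto
  next
    assume "\<exists>q \<phi>. primepow q \<and> picod_scheme m n R q 1 \<phi>"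
    then obtain q where q: "primepow q" and "beta_q m n R q \<le> 1"
      unfolding beta_q_def by (blast intro: Least_le)
    moreover have "beta m n R \<le> beta_q m n R q"
      unfolding beta_def using q by (intro cInf_lower) auto
    ultimately show "beta m n R = 1"
      using beta_in ge1 by fastforce
  qed
qed

theorem lemma3:
  fixes m n :: nat and R :: "nat \<Rightarrow> nat set"
  assumes "n \<ge> 1"
    and "\<forall>i\<in>{1..n}. R i \<subseteq> {1..m} \<and> R i \<noteq> {}"
  shows "beta m n R = 1 \<longleftrightarrow>
    (\<exists>d :: nat \<Rightarrow> nat. (\<forall>i\<in>{1..n}. d i \<in> R i) \<and>
       hg_independent m (picod_edges n R) (d ` {1..n}))"
  unfolding beta_eq_1_iff[OF assms]
proof
  assume "\<exists>q \<phi>. primepow q \<and> picod_scheme m n R q 1 \<phi>"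
  then obtain q \<phi> where "primepow q" "picod_scheme m n R q 1 \<phi>"
    by blast
  then show "\<exists>d. (\<forall>i\<in>{1..n}. d i \<in> R i) \<and> hg_independent m (picod_edges n R) (d ` {1..n})"
    using length_one_scheme_independent[of q n R m \<phi>] primepow_gt_Suc_0 assms(2) by auto
next
  assume "\<exists>d. (\<forall>i\<in>{1..n}. d i \<in> R i) \<and> hg_independent m (picod_edges n R) (d ` {1..n})"
  then show "\<exists>q \<phi>. primepow q \<and> picod_scheme m n R q 1 \<phi>"
    using independent_parity_scheme primepow_prime[OF two_is_prime_nat] by blast
qed

end
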